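(* Let $A,B,C$ be non-collinear points of the real affine plane. Let $A^{+},A^{-}$ be points on line $\overleftrightarrow{BC}$, $B^{+},B^{-}$ points on line $\overleftrightarrow{CA}$, and $C^{+},C^{-}$ points on line $\overleftrightarrow{AB}$, with $A^{+}\neq C$, $A^{-}\neq B$, $B^{+}\neq A$, $B^{-}\neq C$, $C^{+}\neq B$, $C^{-}\neq A$, and define $$a^{+}=\frac{|BA^{+}|}{|A^{+}C|},\quad b^{+}=\frac{|CB^{+}|}{|B^{+}A|},\quad c^{+}=\frac{|AC^{+}|}{|C^{+}B|},\quad a^{-}=\frac{|CA^{-}|}{|A^{-}B|},\quad b^{-}=\frac{|AB^{-}|}{|B^{-}C|},\quad c^{-}=\frac{|BC^{-}|}{|C^{-}A|}.$$ Let $\ell_1=\overleftrightarrow{B^{+}C^{-}}$, $\ell_2=\overleftrightarrow{C^{+}A^{-}}$, $\ell_3=\overleftrightarrow{A^{+}B^{-}}$, and suppose $$D_1=1-a^{+}a^{-}+b^{-}(1+a^{-})+c^{+}(1+a^{+}),\quad D_2=1-b^{+}b^{-}+c^{-}(1+b^{-})+a^{+}(1+b^{+}),\quad D_3=1-c^{+}c^{-}+a^{-}(1+c^{-})+b^{+}(1+c^{+})$$ are all nonzero (equivalently, no two of the lines are parallel). Let $P=\ell_2\cap\ell_3$, $Q=\ell_3\cap\ell_1$, $R=\ell_1\cap\ell_2$. Then the signed area of triangle $PQR$ is $$|\triangle PQR|=|\triangle ABC|\cdot\frac{\left(a^{+}b^{+}c^{+}+a^{-}b^{-}c^{-}+a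^{+}a^{-}+b^{+}b^{-}+c^{+}c^{-}-1\right)^2}{D_1D_2D_3}.$$
   Context: Segment lengths are signed: for points on one of the lines $\overleftrightarrow{AB}$, $\overleftrightarrow{BC}$, $\overleftrightarrow{CA}$, $|PQ|$ is positive when $\overrightarrow{PQ}$ points in the direction of $\overrightarrow{AB}$, $\overrightarrow{BC}$, $\overrightarrow{CA}$ respectively; $|PP|/|PQ|=0$. Equivalently, e.g. $A^{+}=(B+a^{+}C)/(1+a^{+})$, $A^{-}=(a^{-}B+C)/(1+a^{-})$ as vectors, and similarly for the others. Triangle areas are signed: $|\triangle XYZ|$ and $|\triangle ABC|$ have the same sign exactly when the vertex paths $X$-$Y$-$Z$-$X$ and $A$-$B$-$C$-$A$ traverse their triangles in the same rotational direction. *)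

theory Defs
  imports "HOL-Analysis.Analysis"
begin

type_synonym point = "real ^ 2"

definition cross2 :: "point \<Rightarrow> point \<Rightarrow> real" where
  "cross2 u v = u$1 * v$2 - u$2 * v$1"

text \<open>Signed area of the triangle XYZ (positive iff X-Y-Z is counterclockwise).\<close>
definition signed_area :: "point \<Rightarrow> point \<Rightarrow> point \<Rightarrow> real" where
  "signed_area X Y Z = cross2 (Y - X) (Z - X) / 2"

definition collinear3 :: "point \<Rightarrow> point \<Rightarrow> point \<Rightarrow> bool" where
  "collinear3 X Y Z \<longleftrightarrow> cross2 (Y - X) (Z - X) = 0"

definition line :: "point \<Rightarrow> point \<Rightarrow> point set" where
  "line X Y = {X + t *\<^sub>R (Y - X) | t. True}"

text \<open>Signed ratio |XY|/|YZ| of directed segments on a common line (Y \<noteq> Z):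
  the unique real r with Y - X = r (Z - Y).\<close>
definition sratio :: "point \<Rightarrow> point \<Rightarrow> point \<Rightarrow> real" where
  "sratio X Y Z = ((Y - X) \<bullet> (Z - Y)) / ((Z - Y) \<bullet> (Z - Y))"

end

theory Submission
  imports Defs
begin

text \<open>Work in homogeneous barycentric coordinates with respect to ABC. By the definition of the
  ratios, \<open>(1 + c\<^sup>+) C\<^sup>+ = A + c\<^sup>+ B\<close>, and similarly for the other five points. The point with
  coordinates \<open>(1 - a\<^sup>+a\<^sup>- : a\<^sup>-b\<^sup>- + c\<^sup>+ : a\<^sup>+c\<^sup>+ + b\<^sup>-)\<close>, whose coordinate sum is \<open>D\<^sub>1\<close>, has vanishing
  area determinant with both \<open>\<ell>\<^sub>2\<close> and \<open>\<ell>\<^sub>3\<close>, and the directions of these lines have cross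
  product a nonzero multiple of \<open>D\<^sub>1\<close>; hence it is P. Cyclically for Q and R. The signed area of
  PQR is the determinant of the three coordinate rows divided by \<open>D\<^sub>1D\<^sub>2D\<^sub>3\<close>, times the area of
  ABC, and that determinant is a perfect square.\<close>

lemma vec2_eq_iff: "(X::point) = Y \<longleftrightarrow> X$1 = Y$1 \<and> X$2 = Y$2"
  by (simp add: vec_eq_iff forall_2)

lemma line_commute: "line X Y = line Y X"
proof -
  have "line X Y \<subseteq> line Y X" for X Y
  proof
    fix P assume "P \<in> line X Y"
    then obtain t where "P = X + t *\<^sub>R (Y - X)" unfolding line_def by auto
    then have "P = Y + (1 - t) *\<^sub>R (X - Y)" by (simp add: vec2_eq_iff algebra_simps)
    then show "P \<in> line Y X" unfolding line_def by auto
  qed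
  then show ?thesis by blast
qed

lemma sratio_weights:
  assumes "X \<in> line Y Z" "X \<noteq> Z"
  shows "1 + sratio Y X Z \<noteq> 0" and "(1 + sratio Y X Z) *\<^sub>R X = Y + sratio Y X Z *\<^sub>R Z"
proof -
  obtain t where t: "X = Y + t *\<^sub>R (Z - Y)" using assms(1) unfolding line_def by auto
  have "t \<noteq> 1" "Y \<noteq> Z" using t assms(2) by auto
  define w where "w = Z - Y"
  have "w \<bullet> w \<noteq> 0" using \<open>Y \<noteq> Z\<close> by (simp add: w_def)
  have "X - Y = t *\<^sub>R w" "Z - X = (1 - t) *\<^sub>R w" using t by (auto simp: w_def algebra_simps)
  then have "sratio Y X Z = (t * (1 - t) * (w \<bullet> w)) / ((1 - t) * (1 - t) * (w \<bullet> w))"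
    unfolding sratio_def by simp
  then have r: "sratio Y X Z = t / (1 - t)"
    using \<open>w \<bullet> w \<noteq> 0\<close> \<open>t \<noteq> 1\<close> by simp
  show "1 + sratio Y X Z \<noteq> 0" using \<open>t \<noteq> 1\<close> by (simp add: r field_simps)
  show "(1 + sratio Y X Z) *\<^sub>R X = Y + sratio Y X Z *\<^sub>R Z"
    using t \<open>t \<noteq> 1\<close> by (simp add: r vec2_eq_iff field_simps)
qed

lemma collinear3_iff_signed_area: "collinear3 X Y Z \<longleftrightarrow> signed_area X Y Z = 0"
  by (simp add: collinear3_def signed_area_def)

lemma signed_area_rotate: "signed_area B C A = signed_area A B C"
  by (simp add: signed_area_def cross2_def algebra_simps)

lemma cross2_diff_diff:
  "cross2 (Y - X) (Y' - X') = 2 * (signed_area X Y Y' - signed_area X Y X')"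
  by (simp add: signed_area_def cross2_def field_simps)

lemma mem_line_if_signed_area_zero:
  assumes "X \<noteq> Y" "signed_area X Y P = 0"
  shows "P \<in> line X Y"
proof -
  define u where "u = Y - X"
  define v where "v = P - X"
  have "u \<bullet> u \<noteq> 0" using assms(1) by (simp add: u_def)
  have "u$1 * v$2 = u$2 * v$1" using assms(2) by (simp add: u_def v_def signed_area_def cross2_def)
  then have "v = ((v \<bullet> u) / (u \<bullet> u)) *\<^sub>R u"
    using \<open>u \<bullet> u \<noteq> 0\<close> by (simp add: vec2_eq_iff inner_vec_def sum_2 field_simps)
  then show ?thesis unfolding line_def u_def v_def by (auto simp: algebra_simps)
qed

lemma line_inter_unique:
  assumes "cross2 (Y - X) (Y' - X') \<noteq> 0"
    and "P \<in> line X Y" "P \<in> line X' Y'" "P' \<in> line X Y" "P' \<in> line X' Y'"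
  shows "P = P'"
proof -
  obtain s s' t t' where
      "P = X + s *\<^sub>R (Y - X)" "P' = X + s' *\<^sub>R (Y - X)"
      "P = X' + t *\<^sub>R (Y' - X')" "P' = X' + t' *\<^sub>R (Y' - X')"
    using assms(2-5) unfolding line_def by blast
  then have "(s - s') *\<^sub>R (Y - X) = (t - t') *\<^sub>R (Y' - X')"
    by (metis (no_types, lifting) add_diff_cancel_left scaleR_diff_left)
  then have "cross2 ((s - s') *\<^sub>R (Y - X)) (Y' - X') = cross2 ((t - t') *\<^sub>R (Y' - X')) (Y' - X')"
    by simp
  then have "(s - s') * cross2 (Y - X) (Y' - X') = 0"
    by (simp add: cross2_def algebra_simps)
  then have "s = s'" using assms(1) by simp
  then show ?thesis using \<open>P = X + s *\<^sub>R (Y - X)\<close> \<open>P' = X + s' *\<^sub>R (Y - X)\<close> by simp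
qed

lemma signed_area_barycentric:
  assumes "x1 + x2 + x3 = 1" "y1 + y2 + y3 = 1" "z1 + z2 + z3 = 1"
    and "X = x1 *\<^sub>R A + x2 *\<^sub>R B + x3 *\<^sub>R C"
    and "Y = y1 *\<^sub>R A + y2 *\<^sub>R B + y3 *\<^sub>R C"
    and "Z = z1 *\<^sub>R A + z2 *\<^sub>R B + z3 *\<^sub>R C"
  shows "signed_area X Y Z
    = (x1 * (y2 * z3 - y3 * z2) - x2 * (y1 * z3 - y3 * z1) + x3 * (y1 * z2 - y2 * z1))
      * signed_area A B C"
proof -
  have x1: "x1 = 1 - x2 - x3" and y1: "y1 = 1 - y2 - y3" and z1: "z1 = 1 - z2 - z3"
    using assms(1-3) by simp_all
  show ?thesis unfolding signed_area_def cross2_def assms(4-6) x1 y1 z1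
    by (simp add: algebra_simps)
qed

lemma signed_area_homogeneous:
  assumes "dx \<noteq> 0" "dy \<noteq> 0" "dz \<noteq> 0"
    and "x1 + x2 + x3 = dx" "y1 + y2 + y3 = dy" "z1 + z2 + z3 = dz"
    and "dx *\<^sub>R X = x1 *\<^sub>R A + x2 *\<^sub>R B + x3 *\<^sub>R C"
    and "dy *\<^sub>R Y = y1 *\<^sub>R A + y2 *\<^sub>R B + y3 *\<^sub>R C"
    and "dz *\<^sub>R Z = z1 *\<^sub>R A + z2 *\<^sub>R B + z3 *\<^sub>R C"
  shows "signed_area X Y Z
    = (x1 * (y2 * z3 - y3 * z2) - x2 * (y1 * z3 - y3 * z1) + x3 * (y1 * z2 - y2 * z1))
      / (dx * dy * dz) * signed_area A B C"
proof -
  have normalize: "W = (w1 / d) *\<^sub>R A + (w2 / d) *\<^sub>R B + (w3 / d) *\<^sub>R C"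
    if "d \<noteq> 0" "d *\<^sub>R W = w1 *\<^sub>R A + w2 *\<^sub>R B + w3 *\<^sub>R C" for d w1 w2 w3 and W :: point
  proof -
    have "W = (1 / d) *\<^sub>R (d *\<^sub>R W)" using that(1) by simp
    then show ?thesis unfolding that(2) by (simp add: scaleR_add_right)
  qed
  have sum_one: "w1 / d + w2 / d + w3 / d = 1" if "d \<noteq> 0" "w1 + w2 + w3 = d" for w1 w2 w3 d :: real
    using that by (simp add: add_divide_distrib[symmetric])
  show ?thesis
    using assms(1-3)
    by (subst signed_area_barycentric[OF sum_one[OF assms(1,4)] sum_one[OF assms(2,5)]
          sum_one[OF assms(3,6)] normalize[OF assms(1,7)] normalize[OF assms(2,8)]
          normalize[OF assms(3,9)]]) (simp add: field_simps)
qed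

lemma cevian_lines_intersection_barycentric:
  assumes ABC: "signed_area A B C \<noteq> 0"
    and Cp: "1 + cp \<noteq> 0" "(1 + cp) *\<^sub>R Cp = A + cp *\<^sub>R B"
    and Am: "1 + am \<noteq> 0" "(1 + am) *\<^sub>R Am = C + am *\<^sub>R B"
    and Ap: "1 + ap \<noteq> 0" "(1 + ap) *\<^sub>R Ap = B + ap *\<^sub>R C"
    and Bm: "1 + bm \<noteq> 0" "(1 + bm) *\<^sub>R Bm = A + bm *\<^sub>R C"
    and D: "1 - ap * am + bm * (1 + am) + cp * (1 + ap) \<noteq> 0"
    and P: "P \<in> line Cp Am" "P \<in> line Ap Bm"
  shows "(1 - ap * am + bm * (1 + am) + cp * (1 + ap)) *\<^sub>R P
           = (1 - ap * am) *\<^sub>R A + (am * bm + cp) *\<^sub>R B + (ap * cp + bm) *\<^sub>R C"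
proof -
  define d where "d = 1 - ap * am + bm * (1 + am) + cp * (1 + ap)"
  define P0 where "P0 = (1 / d) *\<^sub>R ((1 - ap * am) *\<^sub>R A + (am * bm + cp) *\<^sub>R B + (ap * cp + bm) *\<^sub>R C)"
  have "d \<noteq> 0" using D by (simp add: d_def)
  have P0: "d *\<^sub>R P0 = (1 - ap * am) *\<^sub>R A + (am * bm + cp) *\<^sub>R B + (ap * cp + bm) *\<^sub>R C"
    using \<open>d \<noteq> 0\<close> by (simp add: P0_def)
  have d_sum: "(1 - ap * am) + (am * bm + cp) + (ap * cp + bm) = d" by (simp add: d_def algebra_simps)
  have Cp': "(1 + cp) *\<^sub>R Cp = 1 *\<^sub>R A + cp *\<^sub>R B + 0 *\<^sub>R C" using Cp by simp
  have Am': "(1 + am) *\<^sub>R Am = 0 *\<^sub>R A + am *\<^sub>R B + 1 *\<^sub>R C" using Am by simp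
  have Ap': "(1 + ap) *\<^sub>R Ap = 0 *\<^sub>R A + 1 *\<^sub>R B + ap *\<^sub>R C" using Ap by simp
  have Bm': "(1 + bm) *\<^sub>R Bm = 1 *\<^sub>R A + 0 *\<^sub>R B + bm *\<^sub>R C" using Bm by simp
  have "signed_area Cp Am P0 = 0"
    by (subst signed_area_homogeneous[OF Cp(1) Am(1) \<open>d \<noteq> 0\<close> _ _ d_sum Cp' Am' P0])
      (simp_all add: algebra_simps)
  moreover have "signed_area Ap Bm P0 = 0"
    by (subst signed_area_homogeneous[OF Ap(1) Bm(1) \<open>d \<noteq> 0\<close> _ _ d_sum Ap' Bm' P0])
      (simp_all add: algebra_simps)
  moreover have "cross2 (Am - Cp) (Bm - Ap) \<noteq> 0"
  proof -
    have "signed_area Cp Am Bm = (am * bm + cp) / ((1 + cp) * (1 + am) * (1 + bm)) * signed_area A B C"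
      by (subst signed_area_homogeneous[OF Cp(1) Am(1) Bm(1) _ _ _ Cp' Am' Bm']) simp_all
    moreover have "signed_area Cp Am Ap = (ap * am - 1) / ((1 + cp) * (1 + am) * (1 + ap)) * signed_area A B C"
      by (subst signed_area_homogeneous[OF Cp(1) Am(1) Ap(1) _ _ _ Cp' Am' Ap']) simp_all
    ultimately have "cross2 (Am - Cp) (Bm - Ap)
        = 2 * ((am * bm + cp) / ((1 + cp) * (1 + am) * (1 + bm))
               - (ap * am - 1) / ((1 + cp) * (1 + am) * (1 + ap))) * signed_area A B C"
      unfolding cross2_diff_diff by (simp add: algebra_simps)
    also have "\<dots> = 2 * d / ((1 + cp) * (1 + am) * (1 + ap) * (1 + bm)) * signed_area A B C"
      using Cp(1) Am(1) Ap(1) Bm(1) by (simp add: d_def divide_simps) (simp add: algebra_simps)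
    finally have "cross2 (Am - Cp) (Bm - Ap)
        = 2 * d / ((1 + cp) * (1 + am) * (1 + ap) * (1 + bm)) * signed_area A B C" .
    then show ?thesis using ABC Cp(1) Am(1) Ap(1) Bm(1) \<open>d \<noteq> 0\<close> by simp
  qed
  moreover have "Cp \<noteq> Am" "Ap \<noteq> Bm" using calculation(3) by (auto simp: cross2_def)
  ultimately have "P0 \<in> line Cp Am" "P0 \<in> line Ap Bm" "cross2 (Am - Cp) (Bm - Ap) \<noteq> 0"
    by (simp_all add: mem_line_if_signed_area_zero)
  then have "P = P0" using line_inter_unique P by blast
  then show ?thesis using P0 by (simp add: d_def)
qed

lemma cevian_lines_intersection:
  assumes ABC: "\<not> collinear3 A B C"
    and Cp: "Cp \<in> line A B" "Cp \<noteq> B" and Am: "Am \<in> line B C" "Am \<noteq> B"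
    and Ap: "Ap \<in> line B C" "Ap \<noteq> C" and Bm: "Bm \<in> line C A" "Bm \<noteq> C"
  defines "ap \<equiv> sratio B Ap C" and "am \<equiv> sratio C Am B"
    and "bm \<equiv> sratio A Bm C" and "cp \<equiv> sratio A Cp B"
  assumes D: "1 - ap * am + bm * (1 + am) + cp * (1 + ap) \<noteq> 0"
    and P: "P \<in> line Cp Am" "P \<in> line Ap Bm"
  shows "(1 - ap * am + bm * (1 + am) + cp * (1 + ap)) *\<^sub>R P
           = (1 - ap * am) *\<^sub>R A + (am * bm + cp) *\<^sub>R B + (ap * cp + bm) *\<^sub>R C"
proof (rule cevian_lines_intersection_barycentric[OF _ _ _ _ _ _ _ _ _ D P])
  show "signed_area A B C \<noteq> 0" using ABC by (simp add: collinear3_iff_signed_area)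
  show "1 + cp \<noteq> 0" "(1 + cp) *\<^sub>R Cp = A + cp *\<^sub>R B"
    unfolding cp_def using sratio_weights[OF Cp] by auto
  show "1 + am \<noteq> 0" "(1 + am) *\<^sub>R Am = C + am *\<^sub>R B"
    unfolding am_def using sratio_weights[OF Am(1)[unfolded line_commute[of B]] Am(2)] by auto
  show "1 + ap \<noteq> 0" "(1 + ap) *\<^sub>R Ap = B + ap *\<^sub>R C"
    unfolding ap_def using sratio_weights[OF Ap] by auto
  show "1 + bm \<noteq> 0" "(1 + bm) *\<^sub>R Bm = A + bm *\<^sub>R C"
    unfolding bm_def using sratio_weights[OF Bm(1)[unfolded line_commute[of C]] Bm(2)] by auto
qed

lemma intersection_determinant_square:
  fixes ap am bp bm cp cm :: real
  shows "(1 - ap * am) * ((1 - bp * bm) * (1 - cp * cm) - (bm * cm + ap) * (cp * bp + am))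
       - (am * bm + cp) * ((bp * ap + cm) * (1 - cp * cm) - (bm * cm + ap) * (cm * am + bp))
       + (ap * cp + bm) * ((bp * ap + cm) * (cp * bp + am) - (1 - bp * bm) * (cm * am + bp))
     = (ap * bp * cp + am * bm * cm + ap * am + bp * bm + cp * cm - 1)\<^sup>2"
  by (simp add: algebra_simps power2_eq_square)

theorem theorem5:
  fixes A B C Ap Am Bp Bm Cp Cm P Q R :: point
  assumes ABC: "\<not> collinear3 A B C"
    and onA: "Ap \<in> line B C" "Am \<in> line B C"
    and onB: "Bp \<in> line C A" "Bm \<in> line C A"
    and onC: "Cp \<in> line A B" "Cm \<in> line A B"
    and ne: "Ap \<noteq> C" "Am \<noteq> B" "Bp \<noteq> A" "Bm \<noteq> C" "Cp \<noteq> B" "Cm \<noteq> A"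
    and D1: "1 - sratio B Ap C * sratio C Am B + sratio A Bm C * (1 + sratio C Am B)
               + sratio A Cp B * (1 + sratio B Ap C) \<noteq> 0"
    and D2: "1 - sratio C Bp A * sratio A Bm C + sratio B Cm A * (1 + sratio A Bm C)
               + sratio B Ap C * (1 + sratio C Bp A) \<noteq> 0"
    and D3: "1 - sratio A Cp B * sratio B Cm A + sratio C Am B * (1 + sratio B Cm A)
               + sratio C Bp A * (1 + sratio A Cp B) \<noteq> 0"
    and P: "P \<in> line Cp Am" "P \<in> line Ap Bm"
    and Q: "Q \<in> line Ap Bm" "Q \<in> line Bp Cm"
    and R: "R \<in> line Bp Cm" "R \<in> line Cp Am"
  shows "let ap = sratio B Ap C; bp = sratio C Bp A; cp = sratio A Cp B;
             am = sratio C Am B; bm = sratio A Bm C; cm = sratio B Cm A;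
             d1 = 1 - ap * am + bm * (1 + am) + cp * (1 + ap);
             d2 = 1 - bp * bm + cm * (1 + bm) + ap * (1 + bp);
             d3 = 1 - cp * cm + am * (1 + cm) + bp * (1 + cp)
         in signed_area P Q R
            = signed_area A B C * (ap * bp * cp + am * bm * cm + ap * am + bp * bm + cp * cm - 1)\<^sup>2
              / (d1 * d2 * d3)"
proof -
  have BCA: "\<not> collinear3 B C A" and CAB: "\<not> collinear3 C A B"
    using ABC by (simp_all add: collinear3_iff_signed_area signed_area_rotate)
  define ap bp cp am bm cm where "ap = sratio B Ap C" and "bp = sratio C Bp A"
    and "cp = sratio A Cp B" and "am = sratio C Am B" and "bm = sratio A Bm C"
    and "cm = sratio B Cm A"
  define d1 d2 d3 where "d1 = 1 - ap * am + bm * (1 + am) + cp * (1 + ap)"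
    and "d2 = 1 - bp * bm + cm * (1 + bm) + ap * (1 + bp)"
    and "d3 = 1 - cp * cm + am * (1 + cm) + bp * (1 + cp)"
  note defs = ap_def bp_def cp_def am_def bm_def cm_def d1_def d2_def d3_def
  \<comment> \<open>Q and R are the point P of the configuration relabelled by \<open>A \<mapsto> B \<mapsto> C \<mapsto> A\<close>.\<close>
  have "d1 *\<^sub>R P = (1 - ap * am) *\<^sub>R A + (am * bm + cp) *\<^sub>R B + (ap * cp + bm) *\<^sub>R C"
    using cevian_lines_intersection[OF ABC onC(1) ne(5) onA(2) ne(2) onA(1) ne(1) onB(2) ne(4) D1 P]
    unfolding defs .
  moreover have "d2 *\<^sub>R Q = (bp * ap + cm) *\<^sub>R A + (1 - bp * bm) *\<^sub>R B + (bm * cm + ap) *\<^sub>R C"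
    using cevian_lines_intersection[OF BCA onA(1) ne(1) onB(2) ne(4) onB(1) ne(3) onC(2) ne(6) D2 Q]
    unfolding defs by (simp only: ac_simps)
  moreover have "d3 *\<^sub>R R = (cm * am + bp) *\<^sub>R A + (cp * bp + am) *\<^sub>R B + (1 - cp * cm) *\<^sub>R C"
    using cevian_lines_intersection[OF CAB onB(1) ne(3) onC(2) ne(6) onC(1) ne(5) onA(2) ne(2) D3 R]
    unfolding defs by (simp only: ac_simps)
  moreover have "d1 \<noteq> 0" "d2 \<noteq> 0" "d3 \<noteq> 0" using D1 D2 D3 unfolding defs .
  ultimately have "signed_area P Q R
      = (ap * bp * cp + am * bm * cm + ap * am + bp * bm + cp * cm - 1)\<^sup>2 / (d1 * d2 * d3)
        * signed_area A B C"
    unfolding intersection_determinant_square[symmetric]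
    by (intro signed_area_homogeneous) (simp_all add: d1_def d2_def d3_def algebra_simps)
  then show ?thesis unfolding Let_def defs[symmetric] by simp
qed

end
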